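(* Let $P(z) \in \mathbb{Z}[z]$ have degree at least $2$ with $P(0)=0$, and let $H(n,x,z) = \frac{P(z+nx) - P(z)}{x} \in \mathbb{Z}[n,x,z]$. For $n \in \mathbb{Z}_{\geq 0}$ define maps $\mathbb{Z}^3 \to \mathbb{Z}^3$ by $S_1(n)(x,y,z) = (x, y + H(n,x,z), z + nx)$ and $S_2(n)(x,y,z) = (x + H(n,y,z), y, z + ny)$, and let $\Gamma$ be the semigroup generated by $\{S_1(n), S_2(n) : n \geq 0\}$. Then each $S_i(n)$ preserves $F(x,y,z) = xy - P(z)$, and for every $v_0 = (x_0, y_0, z_0) \in \mathbb{Z}^3$ with $x_0 \neq 0$, the orbit $\Gamma v_0$ is hyperplane-fleeing.
   Context: A set $A \subset \mathbb{R}^d$ is hyperplane-fleeing if $A$ is not contained in any proper affine subspace (translate of a proper linear subspace) of $\mathbb{R}^d$. *)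

theory Defs
  imports "HOL-Analysis.Analysis" "HOL-Computational_Algebra.Polynomial"
begin

text \<open>H(n,x,z) = (P(z+nx) - P(z))/x, computed as the exact quotient in Z[x]
  of the polynomial P(z + n X) - P(z) by X, for fixed integers n, z.\<close>
definition Hpoly :: "int poly \<Rightarrow> int \<Rightarrow> int \<Rightarrow> int \<Rightarrow> int" where
  "Hpoly P n x z = poly ((pcompose P [:z, n:] - [:poly P z:]) div [:0, 1:]) x"

definition S1 :: "int poly \<Rightarrow> nat \<Rightarrow> int \<times> int \<times> int \<Rightarrow> int \<times> int \<times> int" where
  "S1 P n v = (case v of (x, y, z) \<Rightarrow> (x, y + Hpoly P (int n) x z, z + int n * x))"

definition S2 :: "int poly \<Rightarrow> nat \<Rightarrow> int \<times> int \<times> int \<Rightarrow> int \<times> int \<times> int" where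
  "S2 P n v = (case v of (x, y, z) \<Rightarrow> (x + Hpoly P (int n) y z, y, z + int n * y))"

definition Fform :: "int poly \<Rightarrow> int \<times> int \<times> int \<Rightarrow> int" where
  "Fform P v = (case v of (x, y, z) \<Rightarrow> x * y - poly P z)"

inductive_set Gamma :: "int poly \<Rightarrow> (int \<times> int \<times> int \<Rightarrow> int \<times> int \<times> int) set"
  for P :: "int poly" where
  gen1: "S1 P n \<in> Gamma P"
| gen2: "S2 P n \<in> Gamma P"
| comp: "f \<in> Gamma P \<Longrightarrow> g \<in> Gamma P \<Longrightarrow> f \<circ> g \<in> Gamma P"

definition orbit :: "int poly \<Rightarrow> int \<times> int \<times> int \<Rightarrow> (int \<times> int \<times> int) set" where
  "orbit P v0 = (\<lambda>g. g v0) ` Gamma P"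

definition to_R3 :: "int \<times> int \<times> int \<Rightarrow> real ^ 3" where
  "to_R3 v = (case v of (x, y, z) \<Rightarrow> vector [real_of_int x, real_of_int y, real_of_int z])"

definition hyperplane_fleeing :: "('a::real_vector) set \<Rightarrow> bool" where
  "hyperplane_fleeing A \<longleftrightarrow>
     \<not> (\<exists>a L. subspace L \<and> L \<noteq> UNIV \<and> A \<subseteq> (\<lambda>x. a + x) ` L)"

end

theory Submission
  imports Defs
begin

text \<open>Both invariance claims reduce to the identity x \<cdot> H(n,x,z) = P(z + nx) - P(z).
  For fleeing, suppose a nonzero functional (c1,c2,c3) is constant on the orbit of (x0,y0,z0).
  Along the points S1(n)(x0,y0,z0) this says that c2 (P(z0 + n x0) - P(z0)) + c3 x0^2 n
  vanishes for all n; as P has degree at least 2 this forces c2 = c3 = 0.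
  Then comparing a point S1(n)(x0,y0,z0) = (x0,y,z) with y \<noteq> 0 and its image
  under some S2(m) that moves the first coordinate gives c1 = 0.\<close>

lemma mult_Hpoly:
  fixes P :: "int poly"
  shows "x * Hpoly P n x z = poly P (z + n * x) - poly P z"
proof -
  define Q where "Q = pcompose P [:z, n:] - [:poly P z:]"
  have "poly Q 0 = 0" by (simp add: Q_def poly_pcompose)
  then have "[:0, 1:] dvd Q" using poly_eq_0_iff_dvd[of Q 0] by simp
  then have "[:0, 1:] * (Q div [:0, 1:]) = Q" by (rule dvd_mult_div_cancel)
  then have "poly ([:0, 1:] * (Q div [:0, 1:])) x = poly Q x" by simp
  then show ?thesis
    by (simp add: Hpoly_def Q_def poly_pcompose algebra_simps)
qed

lemma Hpoly_0 [simp]: "Hpoly P 0 x z = 0"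
  by (simp add: Hpoly_def pcompose_pCons_0)

lemma Fform_S1: "Fform P (S1 P n v) = Fform P v"
  using mult_Hpoly[of "fst v" P "int n" "snd (snd v)"]
  by (cases v) (simp add: S1_def Fform_def algebra_simps)

lemma Fform_S2: "Fform P (S2 P n v) = Fform P v"
  using mult_Hpoly[of "fst (snd v)" P "int n" "snd (snd v)"]
  by (cases v) (simp add: S2_def Fform_def algebra_simps)

lemma poly_eq_0_if_roots_at_nats:
  fixes q :: "'a::{idom, ring_char_0} poly"
  assumes "\<And>n. poly q (of_nat n) = 0"
  shows "q = 0"
proof (rule ccontr)
  assume "q \<noteq> 0"
  then have "finite {x. poly q x = 0}" by (rule poly_roots_finite)
  moreover have "range (of_nat :: nat \<Rightarrow> 'a) \<subseteq> {x. poly q x = 0}" using assms by auto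
  ultimately have "finite (range (of_nat :: nat \<Rightarrow> 'a))" by (rule finite_subset[rotated])
  then show False by (simp add: finite_image_iff inj_of_nat)
qed

lemma poly_map_poly_of_int:
  fixes p :: "int poly"
  shows "poly (map_poly of_int p) (of_int x :: 'a::comm_ring_1) = of_int (poly p x)"
  by (induction p) (simp_all add: map_poly_pCons)

lemma progression_difference_not_linear:
  fixes P :: "int poly" and c d :: real
  assumes deg: "degree P \<ge> 2" and a: "a \<noteq> 0"
    and vanish: "\<And>n::nat. c * of_int (poly P (b + int n * a) - poly P b) + d * real n = 0"
  shows "c = 0 \<and> d = 0"
proof -
  define R :: "real poly" where "R = map_poly of_int P"
  define D where "D = pcompose R [:of_int b, of_int a:] - [:poly R (of_int b):]"
  define q where "q = smult c D + [:0, d:]"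
  have "poly q (of_nat n) = 0" for n
    using vanish[of n]
    by (simp add: q_def D_def R_def poly_pcompose poly_map_poly_of_int[symmetric] algebra_simps)
  then have "q = 0" by (rule poly_eq_0_if_roots_at_nats)
  have "degree R = degree P" unfolding R_def by (rule degree_map_poly) simp
  then have "degree (pcompose R [:of_int b, of_int a:]) = degree P"
    using a by (simp add: degree_pcompose)
  then have deg_D: "degree D = degree P"
    using deg unfolding D_def diff_conv_add_uminus by (subst degree_add_eq_left) auto
  have c0: "c = 0"
  proof (rule ccontr)
    assume "c \<noteq> 0"
    then have "degree q = degree P"
      unfolding q_def using deg_D deg
      by (subst degree_add_eq_left) (auto simp: degree_pCons_eq_if)
    with \<open>q = 0\<close> deg show False by simp
  qed
  moreover have "d = 0" using vanish[of 1] c0 by simp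
  ultimately show ?thesis ..
qed

lemma Hpoly_not_identically_zero:
  fixes P :: "int poly"
  assumes "degree P \<ge> 2" and "x \<noteq> 0"
  obtains n where "Hpoly P (int n) x z \<noteq> 0"
proof -
  have "\<exists>n. Hpoly P (int n) x z \<noteq> 0"
  proof (rule ccontr)
    assume "\<nexists>n. Hpoly P (int n) x z \<noteq> 0"
    then have "1 * real_of_int (poly P (z + int n * x) - poly P z) + 0 * real n = 0" for n
      using mult_Hpoly[of x P "int n" z] by simp
    from progression_difference_not_linear[OF assms this] show False by simp
  qed
  with that show thesis by blast
qed

lemma hyperplane_fleeingI:
  fixes A :: "'a::euclidean_space set"
  assumes "\<And>c k. (\<And>x. x \<in> A \<Longrightarrow> c \<bullet> x = k) \<Longrightarrow> c = 0"
  shows "hyperplane_fleeing A"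
  unfolding hyperplane_fleeing_def
proof
  assume "\<exists>a L. subspace L \<and> L \<noteq> UNIV \<and> A \<subseteq> (\<lambda>x. a + x) ` L"
  then obtain a L where L: "subspace L" "L \<noteq> UNIV" and A: "A \<subseteq> (\<lambda>x. a + x) ` L"
    by blast
  have "span L \<subset> span UNIV" using L by (metis span_UNIV span_eq_iff top.not_eq_extremum)
  then obtain c :: 'a where "c \<noteq> 0" and c: "\<And>y. y \<in> span L \<Longrightarrow> orthogonal c y"
    using orthogonal_to_subspace_exists_gen by metis
  have "c \<bullet> x = c \<bullet> a" if "x \<in> A" for x
  proof -
    obtain l where "l \<in> L" "x = a + l" using A \<open>x \<in> A\<close> by blast
    then show ?thesis using c[of l] by (simp add: span_base inner_add_right orthogonal_def)
  qed
  then have "c = 0" by (rule assms)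
  with \<open>c \<noteq> 0\<close> show False ..
qed

lemma inner_to_R3 [simp]:
  "c \<bullet> to_R3 (x, y, z) = c$1 * of_int x + c$2 * of_int y + c$3 * of_int z"
  by (simp add: to_R3_def inner_vec_def sum_3)

lemma S1_in_orbit: "S1 P n v \<in> orbit P v"
  unfolding orbit_def by (rule image_eqI[of _ _ "S1 P n"]) (auto intro: Gamma.gen1)

lemma S2_S1_in_orbit: "S2 P m (S1 P n v) \<in> orbit P v"
  unfolding orbit_def
  by (rule image_eqI[of _ _ "S2 P m \<circ> S1 P n"]) (auto intro: Gamma.intros)

lemma level_along_S1_orbit:
  fixes P :: "int poly" and c :: "real^3"
  assumes deg: "degree P \<ge> 2" and x0: "x0 \<noteq> 0"
    and level: "\<And>n. c \<bullet> to_R3 (S1 P n (x0, y0, z0)) = k"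
  shows "c$2 = 0" and "c$3 = 0"
proof -
  have "c$2 * real_of_int (poly P (z0 + int n * x0) - poly P z0) + (c$3 * x0\<^sup>2) * real n = 0"
    for n
  proof -
    have "c$2 * Hpoly P (int n) x0 z0 + c$3 * (int n * x0) = 0"
      using level[of n] level[of 0] by (simp add: S1_def algebra_simps)
    then have "c$2 * (x0 * Hpoly P (int n) x0 z0) + (c$3 * x0\<^sup>2) * real n = 0"
      by (simp add: algebra_simps power2_eq_square flip: distrib_left)
    then show ?thesis by (simp add: mult_Hpoly)
  qed
  from progression_difference_not_linear[OF deg x0 this] x0 show "c$2 = 0" "c$3 = 0" by auto
qed

lemma level_on_orbit_eq_0:
  fixes P :: "int poly" and c :: "real^3"
  assumes deg: "degree P \<ge> 2" and x0: "x0 \<noteq> 0"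
    and level: "\<And>p. p \<in> orbit P (x0, y0, z0) \<Longrightarrow> c \<bullet> to_R3 p = k"
  shows "c = 0"
proof -
  have c2: "c$2 = 0" and c3: "c$3 = 0"
    using level_along_S1_orbit[OF deg x0 level[OF S1_in_orbit]] by auto
  have "\<exists>n. y0 + Hpoly P (int n) x0 z0 \<noteq> 0"
  proof (rule ccontr)
    assume "\<nexists>n. y0 + Hpoly P (int n) x0 z0 \<noteq> 0"
    then have all: "y0 + Hpoly P (int n) x0 z0 = 0" for n by simp
    have H: "Hpoly P (int n) x0 z0 = 0" for n using all[of 0] all[of n] by simp
    obtain n where "Hpoly P (int n) x0 z0 \<noteq> 0" by (rule Hpoly_not_identically_zero[OF deg x0])
    with H show False by simp
  qed
  then obtain n where "y0 + Hpoly P (int n) x0 z0 \<noteq> 0" ..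
  define y where "y = y0 + Hpoly P (int n) x0 z0"
  define z where "z = z0 + int n * x0"
  have "y \<noteq> 0" using \<open>y0 + Hpoly P (int n) x0 z0 \<noteq> 0\<close> by (simp add: y_def)
  have S1: "S1 P n (x0, y0, z0) = (x0, y, z)" by (simp add: S1_def y_def z_def)
  obtain m where "Hpoly P (int m) y z \<noteq> 0"
    by (rule Hpoly_not_identically_zero[OF deg \<open>y \<noteq> 0\<close>])
  moreover have "c$1 * Hpoly P (int m) y z = 0"
    using level[OF S2_S1_in_orbit[of P m n]] level[OF S1_in_orbit[of P n]]
    by (simp add: S1 S2_def c2 c3 algebra_simps)
  ultimately show "c = 0" using c2 c3 by (simp add: vec_eq_iff forall_3)
qed

theorem mainTheorem4:
  fixes P :: "int poly"
  assumes "degree P \<ge> 2" and "poly P 0 = 0"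
  shows "(\<forall>n v. Fform P (S1 P n v) = Fform P v \<and> Fform P (S2 P n v) = Fform P v)
       \<and> (\<forall>x0 y0 z0. x0 \<noteq> 0 \<longrightarrow> hyperplane_fleeing (to_R3 ` orbit P (x0, y0, z0)))"
proof (intro conjI allI impI)
  fix n v
  show "Fform P (S1 P n v) = Fform P v" by (rule Fform_S1)
  show "Fform P (S2 P n v) = Fform P v" by (rule Fform_S2)
next
  fix x0 y0 z0 :: int
  assume "x0 \<noteq> 0"
  show "hyperplane_fleeing (to_R3 ` orbit P (x0, y0, z0))"
  proof (rule hyperplane_fleeingI)
    fix c k
    assume "\<And>x. x \<in> to_R3 ` orbit P (x0, y0, z0) \<Longrightarrow> c \<bullet> x = k"
    then have "c \<bullet> to_R3 p = k" if "p \<in> orbit P (x0, y0, z0)" for p using that by blast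
    then show "c = 0" by (rule level_on_orbit_eq_0[OF assms(1) \<open>x0 \<noteq> 0\<close>])
  qed
qed

end
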